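(* The triple $(\mathcal{APT},[\cdot,\cdot],\rhd)$ is a post-Lie algebra. That is, $[\cdot,\cdot]$ is a Lie bracket on $\mathcal{APT}$, and for all $X,Y,Z \in \mathcal{APT}$: \[ X\rhd[Y,Z]=[X\rhd Y,Z]+[Y,X\rhd Z], \] \[ [X,Y]\rhd Z=X\rhd(Y\rhd Z)-(X\rhd Y)\rhd Z-Y\rhd(X\rhd Z)+(Y\rhd X)\rhd Z. \]
   Context: Work over a fixed ground field. A planar rooted tree is a finite rooted tree, with edges oriented away from the root, together with a total order on the outgoing edges of each vertex; $\mathcal{PT}$ is the span of isomorphism classes of planar rooted trees. $\mathrm{Lie}(\mathcal{PT})$ is the free Lie algebra on $\mathcal{PT}$, with bracket $[\cdot,\cdot]$. For planar trees $t_1,t_2$, $t_1\rhd t_2$ is the sum, over all vertices $v$ of $t_2$, of the planar tree obtained by adding an edge from $v$ to the root of $t_1$ as the leftmost outgoing edge of $v$. It is extended to $\mathrm{Lie}(\mathcal{PT})$ by the rules \[ t_1\rhd[t_2,t_3]=[t_1\rhd t_2,t_3]+[t_2,t_1\rhd t_3], \] \[ [t_1,t_2]\rhd t_3=t_1\rhd(t_2\rhd t_3)-(t_1\rhd t_2)\rhd t_3-t_2\rhd(t_1\rhd t_3)+(t_2\rhd t_1)\rhd t_3. \] A planar aroma is an isomorphism class of finite connected directed graphs (loops allowed) in which every vertex has exactly one incoming edge, together with a total order on the outgoing edges at each vertex. $\mathcal{PA}$ is their span and $S(\mathcal{PA})$ is the symmetric algebra on $\mathcal{PA}$. For a planar tree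 $t$ and a monomial $\alpha\in S(\mathcal{PA})$, $\rho(t)(\alpha)$ is the sum, over all vertices $v$ of all factors of $\alpha$, of the monomial obtained by adding an edge from $v$ to the root of $t$ as the leftmost outgoing edge of $v$; this is extended linearly in $\alpha$. For Lie polynomials, \[ \rho([t_1,t_2])=\rho(t_1)\rho(t_2)-\rho(t_1\rhd t_2)-\rho(t_2)\rho(t_1)+\rho(t_2\rhd t_1). \] Set $\mathcal{APT}=S(\mathcal{PA})\otimes \mathrm{Lie}(\mathcal{PT})$, with elements written $\alpha t$. Define, for $\alpha_i\in S(\mathcal{PA})$ and $t_i\in\mathrm{Lie}(\mathcal{PT})$ (extended bilinearly): \[ [\alpha_1t_1,\alpha_2t_2]=\alpha_1\alpha_2[t_1,t_2], \] \[ \alpha_1t_1\rhd\alpha_2t_2=\alpha_1\,\rho(t_1)(\alpha_2)\,t_2+\alpha_1\alpha_2\,(t_1\rhd t_2). \] *)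

theory Defs
  imports Main "HOL-Library.Poly_Mapping" "HOL-Library.Multiset"
begin

definition smul :: "'k::comm_ring_1 \<Rightarrow> ('a \<Rightarrow>\<^sub>0 'k) \<Rightarrow> ('a \<Rightarrow>\<^sub>0 'k)" where
  "smul c x = Poly_Mapping.map (\<lambda>v. c * v) x"

definition lin :: "('a \<Rightarrow> ('b \<Rightarrow>\<^sub>0 'k::comm_ring_1)) \<Rightarrow> ('a \<Rightarrow>\<^sub>0 'k) \<Rightarrow> ('b \<Rightarrow>\<^sub>0 'k)" where
  "lin f x = (\<Sum>a\<in>Poly_Mapping.keys x. smul (Poly_Mapping.lookup x a) (f a))"

definition bilin :: "('a \<Rightarrow> 'b \<Rightarrow> ('c \<Rightarrow>\<^sub>0 'k::comm_ring_1)) \<Rightarrow> ('a \<Rightarrow>\<^sub>0 'k) \<Rightarrow> ('b \<Rightarrow>\<^sub>0 'k) \<Rightarrow> ('c \<Rightarrow>\<^sub>0 'k)" where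
  "bilin f x y = lin (\<lambda>a. lin (\<lambda>b. f a b) y) x"

text \<open>A planar rooted tree up to isomorphism is a root together with the ordered
  list of its subtrees (children in the order of the outgoing edges).\<close>
datatype ptree = Node "ptree list"

fun graft_at :: "('a \<Rightarrow> 'a list) \<Rightarrow> 'a list \<Rightarrow> 'a list list" where
  "graft_at f [] = []"
| "graft_at f (x # xs) = List.map (\<lambda>y. y # xs) (f x) @ List.map (\<lambda>l. x # l) (graft_at f xs)"

text \<open>graft t s: list (with multiplicity) of all planar trees obtained from s by adding an
  edge from a vertex of s to the root of t, as the leftmost outgoing edge of that vertex.\<close>
fun graft :: "ptree \<Rightarrow> ptree \<Rightarrow> ptree list"
and graft_list :: "ptree \<Rightarrow> ptree list \<Rightarrow> ptree list list" where
  "graft t (Node cs) = Node (t # cs) # List.map Node (graft_list t cs)"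
| "graft_list t [] = []"
| "graft_list t (c # cs) = List.map (\<lambda>s. s # cs) (graft t c) @ List.map (\<lambda>l. c # l) (graft_list t cs)"

text \<open>A planar aroma is a connected graph with every in-degree 1: a directed cycle of
  vertices v_1 -> ... -> v_n -> v_1 (n >= 1), each with planar trees attached.  A cycle vertex
  is encoded by (L, R): its ordered outgoing edges are L, then the cycle edge, then R.
  The raw cycle (x, xs) stands for the nonempty list x # xs; isomorphism = cyclic rotation.\<close>
type_synonym cvert = "ptree list \<times> ptree list"

definition arel :: "(cvert \<times> cvert list) \<Rightarrow> (cvert \<times> cvert list) \<Rightarrow> bool" where
  "arel p q \<longleftrightarrow> (\<exists>n. fst q # snd q = rotate n (fst p # snd p))"

lemma rotate_back:
  assumes "xs \<noteq> []"
  shows "rotate (length xs - n mod length xs) (rotate n xs) = xs"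
proof -
  have "rotate (length xs - n mod length xs) (rotate n xs) = rotate (length xs - n mod length xs + n) xs"
    by (simp add: rotate_rotate)
  also have "\<dots> = xs"
  proof (rule rotate_id)
    have L: "length xs > 0" using assms by simp
    have "(length xs - n mod length xs + n) mod length xs
          = (length xs - n mod length xs + n mod length xs) mod length xs"
      by (simp add: mod_add_right_eq)
    also have "\<dots> = length xs mod length xs"
      using L by (simp add: less_imp_le)
    finally show "(length xs - n mod length xs + n) mod length xs = 0" by simp
  qed
  finally show ?thesis .
qed

lemma arel_equivp: "equivp arel"
proof (rule equivpI)
  show "reflp arel" unfolding reflp_def arel_def by (metis rotate0 id_apply)
  show "symp arel" unfolding symp_def arel_def
    by (metis list.distinct(1) length_rotate rotate_back)
  show "transp arel" unfolding transp_def arel_def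
    by (metis rotate_rotate)
qed

quotient_type aroma = "cvert \<times> cvert list" / arel
  by (rule arel_equivp)

fun graft_cv :: "ptree \<Rightarrow> cvert \<Rightarrow> cvert list" where
  "graft_cv t (l, r) = (t # l, r) # List.map (\<lambda>l'. (l', r)) (graft_list t l)
                        @ List.map (\<lambda>r'. (l, r')) (graft_list t r)"

text \<open>All aromas obtained from a by adding an edge from one of its vertices to the root of t
  as leftmost outgoing edge (with multiplicity; computed on a representative).\<close>
definition graft_aroma :: "ptree \<Rightarrow> aroma \<Rightarrow> aroma list" where
  "graft_aroma t a = (let p = rep_aroma a in
     List.map (\<lambda>l. abs_aroma (hd l, tl l)) (graft_at (graft_cv t) (fst p # snd p)))"

text \<open>S(PA): monomials are finite multisets of planar aromas.\<close>
type_synonym 'k SPA = "aroma multiset \<Rightarrow>\<^sub>0 'k"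
text \<open>Tensor algebra T(PT): basis = words of planar trees; Lie(PT) is realised inside it.\<close>
type_synonym 'k TPT = "ptree list \<Rightarrow>\<^sub>0 'k"
text \<open>S(PA) \<otimes> T(PT); APT is the subspace S(PA) \<otimes> Lie(PT).\<close>
type_synonym 'k ATPT = "(aroma multiset \<times> ptree list) \<Rightarrow>\<^sub>0 'k"

definition mulS :: "'k::field SPA \<Rightarrow> 'k SPA \<Rightarrow> 'k SPA" where
  "mulS = bilin (\<lambda>m1 m2. Poly_Mapping.single (m1 + m2) 1)"

definition commT :: "'k::field TPT \<Rightarrow> 'k TPT \<Rightarrow> 'k TPT" where
  "commT = bilin (\<lambda>w1 w2. Poly_Mapping.single (w1 @ w2) 1 - Poly_Mapping.single (w2 @ w1) 1)"

text \<open>The free Lie algebra Lie(PT): the Lie subalgebra of T(PT) (commutator bracket)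
  generated by the one-letter words.\<close>
inductive_set LiePT :: "'k::field TPT set" where
  gen: "Poly_Mapping.single [t] 1 \<in> LiePT"
| zero: "0 \<in> LiePT"
| add: "x \<in> LiePT \<Longrightarrow> y \<in> LiePT \<Longrightarrow> x + y \<in> LiePT"
| smul: "x \<in> LiePT \<Longrightarrow> smul c x \<in> LiePT"
| comm: "x \<in> LiePT \<Longrightarrow> y \<in> LiePT \<Longrightarrow> commT x y \<in> LiePT"

text \<open>Action of a single tree t: t \<rhd> on T(PT) as a derivation of concatenation,
  which restricts to the rule t\<rhd>[t2,t3] = [t\<rhd>t2,t3] + [t2,t\<rhd>t3] on Lie(PT).\<close>
definition triD :: "ptree \<Rightarrow> 'k::field TPT \<Rightarrow> 'k TPT" where
  "triD t = lin (\<lambda>w. sum_list (List.map (\<lambda>w'. Poly_Mapping.single w' 1) (graft_at (graft t) w)))"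

text \<open>Action of words (extension to the enveloping algebra):
  (a w) \<rhd> Z = a \<rhd> (w \<rhd> Z) - (a \<rhd> w) \<rhd> Z; this gives
  [t1,t2] \<rhd> Z = t1\<rhd>(t2\<rhd>Z) - (t1\<rhd>t2)\<rhd>Z - t2\<rhd>(t1\<rhd>Z) + (t2\<rhd>t1)\<rhd>Z on Lie polynomials.\<close>
primrec triWn :: "nat \<Rightarrow> ptree list \<Rightarrow> 'k::field TPT \<Rightarrow> 'k TPT" where
  "triWn 0 w Z = Z"
| "triWn (Suc n) w Z = (case w of [] \<Rightarrow> Z | a # v \<Rightarrow>
      triD a (triWn n v Z) - lin (\<lambda>v'. triWn n v' Z) (triD a (Poly_Mapping.single v 1)))"

definition triW :: "ptree list \<Rightarrow> 'k::field TPT \<Rightarrow> 'k TPT" where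
  "triW w Z = triWn (length w) w Z"

text \<open>\<rho>(t) on S(PA) for a tree t: sum over all vertices of all factors of a monomial.\<close>
definition rho1 :: "ptree \<Rightarrow> 'k::field SPA \<Rightarrow> 'k SPA" where
  "rho1 t = lin (\<lambda>\<alpha>. sum_mset (image_mset (\<lambda>a.
      sum_list (List.map (\<lambda>a'. Poly_Mapping.single (\<alpha> - {#a#} + {#a'#}) 1) (graft_aroma t a))) \<alpha>))"

text \<open>\<rho> on words: \<rho>(a w) = \<rho>(a) \<rho>(w) - \<rho>(a \<rhd> w), giving
  \<rho>([t1,t2]) = \<rho>(t1)\<rho>(t2) - \<rho>(t1\<rhd>t2) - \<rho>(t2)\<rho>(t1) + \<rho>(t2\<rhd>t1) on Lie polynomials.\<close>
primrec rhoWn :: "nat \<Rightarrow> ptree list \<Rightarrow> 'k::field SPA \<Rightarrow> 'k SPA" where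
  "rhoWn 0 w \<alpha> = \<alpha>"
| "rhoWn (Suc n) w \<alpha> = (case w of [] \<Rightarrow> \<alpha> | a # v \<Rightarrow>
      rho1 a (rhoWn n v \<alpha>) - lin (\<lambda>v'. rhoWn n v' \<alpha>) (triD a (Poly_Mapping.single v 1)))"

definition rhoW :: "ptree list \<Rightarrow> 'k::field SPA \<Rightarrow> 'k SPA" where
  "rhoW w \<alpha> = rhoWn (length w) w \<alpha>"

definition tens :: "'k::field SPA \<Rightarrow> 'k TPT \<Rightarrow> 'k ATPT" where
  "tens = bilin (\<lambda>m w. Poly_Mapping.single (m, w) 1)"

definition slice :: "aroma multiset \<Rightarrow> 'k::field ATPT \<Rightarrow> 'k TPT" where
  "slice m = lin (\<lambda>(m', w). if m' = m then Poly_Mapping.single w 1 else 0)"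

text \<open>APT = S(PA) \<otimes> Lie(PT) inside S(PA) \<otimes> T(PT).\<close>
definition APT :: "'k::field ATPT set" where
  "APT = {X. \<forall>m. slice m X \<in> LiePT}"

definition brA :: "'k::field ATPT \<Rightarrow> 'k ATPT \<Rightarrow> 'k ATPT" where
  "brA = bilin (\<lambda>(m1, w1) (m2, w2).
     Poly_Mapping.single (m1 + m2, w1 @ w2) 1 - Poly_Mapping.single (m1 + m2, w2 @ w1) 1)"

text \<open>\<alpha>1 t1 \<rhd> \<alpha>2 t2 = \<alpha>1 \<rho>(t1)(\<alpha>2) t2 + \<alpha>1\<alpha>2 (t1 \<rhd> t2).\<close>
definition triA :: "'k::field ATPT \<Rightarrow> 'k ATPT \<Rightarrow> 'k ATPT" where
  "triA = bilin (\<lambda>(m1, w1) (m2, w2).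
     tens (mulS (Poly_Mapping.single m1 1) (rhoW w1 (Poly_Mapping.single m2 1))) (Poly_Mapping.single w2 1)
   + tens (Poly_Mapping.single (m1 + m2) 1) (triW w1 (Poly_Mapping.single w2 1)))"

end

theory Submission
  imports Defs "HOL-Library.Product_Plus"
begin

text \<open>APT is spanned by the pure tensors \<open>\<alpha> x\<close> with \<open>x\<close> a Lie polynomial, and both operations are
  bilinear, so the post-Lie identities reduce to pure tensors.  There they follow from two facts
  about the action of a Lie polynomial \<open>x\<close>, both by grafting on T(PT) and by \<open>\<rho>\<close> on S(PA):
  \<open>x\<close> acts by a derivation, and \<open>act (x z) = act x \<circ> act z - act (x \<rhd> z)\<close> for every word \<open>z\<close>,
  i.e. the action is multiplicative for the Grossman--Larson product \<open>x z + x \<rhd> z\<close>.  Both facts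
  hold for single trees by the recursive definition of the action of words, and they pass to a
  bracket \<open>[x, y]\<close> once they hold for \<open>x\<close>, \<open>y\<close>, \<open>x \<rhd> y\<close> and \<open>y \<rhd> x\<close>.  As \<open>x \<rhd> y\<close> is again a
  Lie polynomial, of the same degree as \<open>y\<close>, strong induction on the degree concludes.\<close>

abbreviation lookup where "lookup \<equiv> Poly_Mapping.lookup"
abbreviation single where "single \<equiv> Poly_Mapping.single"
abbreviation keys where "keys \<equiv> Poly_Mapping.keys"

lemma lookup_smul [simp]: "lookup (smul c x) a = c * lookup x a"
  unfolding smul_def by transfer (simp add: when_def)

lemma smul_single [simp]: "smul c (single a d) = single a (c * d)"
  by (rule poly_mapping_eqI) (simp add: lookup_single when_def)

lemma smul_add: "smul c (x + y) = smul c x + smul c y"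
  by (rule poly_mapping_eqI) (simp add: lookup_add algebra_simps)

lemma smul_add_left: "smul (c + d) x = smul c x + smul d x"
  by (rule poly_mapping_eqI) (simp add: lookup_add algebra_simps)

lemma smul_diff: "smul c (x - y) = smul c x - smul c y"
  by (rule poly_mapping_eqI) (simp add: lookup_minus algebra_simps)

lemma smul_zero [simp]: "smul c 0 = 0"
  by (rule poly_mapping_eqI) simp

lemma smul_zero_left [simp]: "smul 0 x = 0"
  by (rule poly_mapping_eqI) simp

lemma smul_one [simp]: "smul 1 x = x"
  by (rule poly_mapping_eqI) simp

lemma smul_smul [simp]: "smul c (smul d x) = smul (c * d) x"
  by (rule poly_mapping_eqI) (simp add: algebra_simps)

lemma smul_minus_one: "smul (-1) x = - x"
  by (rule poly_mapping_eqI) simp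

lemma smul_sum: "smul c (sum f I) = (\<Sum>i\<in>I. smul c (f i))"
  by (induction I rule: infinite_finite_induct) (auto simp: smul_add)

lemma keys_smul: "keys (smul c x) \<subseteq> keys x"
  by (auto simp: in_keys_iff)

lemma poly_mapping_sum_single: "x = (\<Sum>a\<in>keys x. single a (lookup x a))"
proof -
  have *: "finite I \<Longrightarrow> lookup (\<Sum>a\<in>I. single a (lookup x a)) j = (if j \<in> I then lookup x j else 0)"
    for I j
    by (induction I rule: finite_induct) (auto simp: lookup_single lookup_add when_def)
  show ?thesis by (rule poly_mapping_eqI) (simp add: * in_keys_iff)
qed

lemma lin_superset:
  assumes "finite S" "keys x \<subseteq> S"
  shows "lin f x = (\<Sum>a\<in>S. smul (lookup x a) (f a))"
  unfolding lin_def using assms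
  by (intro sum.mono_neutral_left) (auto simp: in_keys_iff)

lemma lin_zero [simp]: "lin f 0 = 0"
  by (simp add: lin_def)

lemma lin_single [simp]: "lin f (single a c) = smul c (f a)"
  by (cases "c = 0") (auto simp: lin_def)

lemma lin_add: "lin f (x + y) = lin f x + lin f y"
proof -
  let ?S = "keys x \<union> keys y"
  have "lin f (x + y) = (\<Sum>a\<in>?S. smul (lookup (x + y) a) (f a))"
    by (rule lin_superset) (auto simp: keys_add)
  also have "\<dots> = (\<Sum>a\<in>?S. smul (lookup x a) (f a)) + (\<Sum>a\<in>?S. smul (lookup y a) (f a))"
    by (simp add: lookup_add smul_add_left sum.distrib)
  also have "\<dots> = lin f x + lin f y"
    using lin_superset[of ?S x f] lin_superset[of ?S y f] by simp
  finally show ?thesis .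
qed

lemma lin_smul: "lin f (smul c x) = smul c (lin f x)"
proof -
  have "lin f (smul c x) = (\<Sum>a\<in>keys x. smul (lookup (smul c x) a) (f a))"
    by (rule lin_superset) (auto simp: in_keys_iff)
  then show ?thesis by (simp add: lin_def smul_sum)
qed

lemma lin_cong: "(\<And>a. a \<in> keys x \<Longrightarrow> f a = g a) \<Longrightarrow> lin f x = lin g x"
  by (simp add: lin_def)

lemma lin_plus_fun: "lin (\<lambda>a. f a + g a) x = lin f x + lin g x"
  by (simp add: lin_def smul_add sum.distrib)

lemma lin_minus_fun: "lin (\<lambda>a. f a - g a) x = lin f x - lin g x"
  by (simp add: lin_def smul_diff sum_subtractf)

lemma lin_smul_fun: "lin (\<lambda>a. smul c (f a)) x = smul c (lin f x)"
  by (simp add: lin_def smul_sum mult.commute)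

lemma keys_lin: "keys (lin f x) \<subseteq> (\<Union>a\<in>keys x. keys (f a))"
  unfolding lin_def using keys_sum keys_smul by fastforce

definition lin_map :: "(('a \<Rightarrow>\<^sub>0 'k::comm_ring_1) \<Rightarrow> ('b \<Rightarrow>\<^sub>0 'k)) \<Rightarrow> bool" where
  "lin_map L \<longleftrightarrow> (\<forall>x y. L (x + y) = L x + L y) \<and> (\<forall>c x. L (smul c x) = smul c (L x))"

lemma lin_mapI:
  "(\<And>x y. L (x + y) = L x + L y) \<Longrightarrow> (\<And>c x. L (smul c x) = smul c (L x)) \<Longrightarrow> lin_map L"
  by (simp add: lin_map_def)

lemma lin_map_add: "lin_map L \<Longrightarrow> L (x + y) = L x + L y"
  by (simp add: lin_map_def)

lemma lin_map_smul: "lin_map L \<Longrightarrow> L (smul c x) = smul c (L x)"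
  by (simp add: lin_map_def)

lemma lin_map_zero: "lin_map L \<Longrightarrow> L 0 = 0"
  using lin_map_smul[of L 0 0] by simp

lemma lin_map_uminus: "lin_map L \<Longrightarrow> L (- x) = - L x"
  using lin_map_smul[of L "-1" x] by (simp add: smul_minus_one)

lemma lin_map_diff: "lin_map L \<Longrightarrow> L (x - y) = L x - L y"
  using lin_map_add[of L x "- y"] lin_map_uminus[of L y] by simp

lemma lin_map_sum: "lin_map L \<Longrightarrow> L (sum f I) = (\<Sum>i\<in>I. L (f i))"
  by (induction I rule: infinite_finite_induct) (auto simp: lin_map_zero lin_map_add)

lemma lin_map_lin [simp]: "lin_map (lin f)"
  by (simp add: lin_map_def lin_add lin_smul)

lemma lin_map_ident [simp]: "lin_map (\<lambda>x. x)"
  by (simp add: lin_map_def)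

lemma lin_map_compose: "lin_map f \<Longrightarrow> lin_map g \<Longrightarrow> lin_map (\<lambda>x. f (g x))"
  by (simp add: lin_map_def)

lemma lin_map_plus: "lin_map f \<Longrightarrow> lin_map g \<Longrightarrow> lin_map (\<lambda>x. f x + g x)"
  by (simp add: lin_map_def smul_add algebra_simps)

lemma lin_map_minus: "lin_map f \<Longrightarrow> lin_map g \<Longrightarrow> lin_map (\<lambda>x. f x - g x)"
  by (simp add: lin_map_def smul_diff algebra_simps)

lemma lin_map_lin_fun:
  assumes "\<And>a. a \<in> keys x \<Longrightarrow> lin_map (F a)"
  shows "lin_map (\<lambda>Z. lin (\<lambda>a. F a Z) x)"
proof (rule lin_mapI)
  fix Z1 Z2
  have "lin (\<lambda>a. F a (Z1 + Z2)) x = lin (\<lambda>a. F a Z1 + F a Z2) x"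
    by (rule lin_cong) (simp add: lin_map_add assms)
  then show "lin (\<lambda>a. F a (Z1 + Z2)) x = lin (\<lambda>a. F a Z1) x + lin (\<lambda>a. F a Z2) x"
    by (simp add: lin_plus_fun)
next
  fix c Z
  have "lin (\<lambda>a. F a (smul c Z)) x = lin (\<lambda>a. smul c (F a Z)) x"
    by (rule lin_cong) (simp add: lin_map_smul assms)
  then show "lin (\<lambda>a. F a (smul c Z)) x = smul c (lin (\<lambda>a. F a Z) x)"
    by (simp add: lin_smul_fun)
qed

lemma lin_map_lin_comm: "lin_map L \<Longrightarrow> L (lin f x) = lin (\<lambda>a. L (f a)) x"
  by (simp add: lin_def lin_map_sum lin_map_smul)

lemma lin_map_eq_lin: "lin_map L \<Longrightarrow> L x = lin (\<lambda>a. L (single a 1)) x"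
  using lin_map_lin_comm[of L "\<lambda>a. single a 1" x]
  by (simp add: lin_def poly_mapping_sum_single[symmetric])

lemma lin_map_eq_on_keys:
  assumes "lin_map f" "lin_map g" "\<And>a. a \<in> keys x \<Longrightarrow> f (single a 1) = g (single a 1)"
  shows "f x = g x"
proof -
  have "f x = lin (\<lambda>a. f (single a 1)) x" using assms(1) by (rule lin_map_eq_lin)
  also have "\<dots> = lin (\<lambda>a. g (single a 1)) x" using assms(3) by (rule lin_cong)
  also have "\<dots> = g x" using assms(2) by (rule lin_map_eq_lin[symmetric])
  finally show ?thesis .
qed

lemma lin_map_eqI:
  assumes "lin_map f" "lin_map g" "\<And>a. f (single a 1) = g (single a 1)"
  shows "f = g"
  using assms lin_map_eq_on_keys by blast

lemma bilin_single [simp]: "bilin f (single a 1) (single b 1) = f a b"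
  by (simp add: bilin_def)

lemma lin_map_bilin_left [simp]: "lin_map (\<lambda>x. bilin f x y)"
  by (simp add: bilin_def)

lemma lin_map_bilin_right [simp]: "lin_map (bilin f x)"
  unfolding bilin_def by (rule lin_map_lin_fun) simp

lemma bilinear_eqI:
  assumes "\<And>y. lin_map (\<lambda>x. F x y)" "\<And>x. lin_map (\<lambda>y. F x y)"
    "\<And>y. lin_map (\<lambda>x. G x y)" "\<And>x. lin_map (\<lambda>y. G x y)"
    "\<And>a b. F (single a 1) (single b 1) = G (single a 1) (single b 1)"
  shows "F x y = G x y"
proof -
  have "F (single a 1) = G (single a 1)" for a
    by (rule lin_map_eqI) (use assms in auto)
  then have "(\<lambda>x. F x y) = (\<lambda>x. G x y)"
    by (intro lin_map_eqI) (use assms in auto)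
  from fun_cong[OF this, of x] show ?thesis by simp
qed

lemma bilin_minus_fun: "bilin (\<lambda>a b. f a b - g a b) x y = bilin f x y - bilin g x y"
  by (simp add: bilin_def lin_minus_fun)

lemma smul_conv_mult: "smul c x = single 0 c * (x :: 'a::monoid_add \<Rightarrow>\<^sub>0 'k::comm_ring_1)"
  unfolding smul_def by (rule mult_map_scale_conv_mult)

lemma single_zero_mult_commute: "single 0 c * (x :: 'a::monoid_add \<Rightarrow>\<^sub>0 'k::comm_ring_1) = x * single 0 c"
proof -
  have "single 0 c * x = (\<Sum>a\<in>keys x. single 0 c * single a (lookup x a))"
    by (subst poly_mapping_sum_single) (simp add: sum_distrib_left)
  also have "\<dots> = (\<Sum>a\<in>keys x. single a (lookup x a) * single 0 c)"
    by (simp add: mult_single mult.commute)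
  also have "\<dots> = x * single 0 c"
    by (subst (3) poly_mapping_sum_single) (simp add: sum_distrib_right)
  finally show ?thesis .
qed

lemma smul_mult_left: "smul c x * y = smul c (x * (y :: 'a::monoid_add \<Rightarrow>\<^sub>0 'k::comm_ring_1))"
  by (simp add: smul_conv_mult mult.assoc)

lemma smul_mult_right: "x * smul c y = smul c (x * (y :: 'a::monoid_add \<Rightarrow>\<^sub>0 'k::comm_ring_1))"
  by (metis mult.assoc single_zero_mult_commute smul_conv_mult)

lemma lin_map_mult_left [simp]: "lin_map (\<lambda>x. x * (y :: 'a::monoid_add \<Rightarrow>\<^sub>0 'k::comm_ring_1))"
  by (simp add: lin_map_def distrib_right smul_mult_left)

lemma lin_map_mult_right [simp]: "lin_map (\<lambda>x. y * (x :: 'a::monoid_add \<Rightarrow>\<^sub>0 'k::comm_ring_1))"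
  by (simp add: lin_map_def distrib_left smul_mult_right)

lemma bilin_single_plus: "bilin (\<lambda>a b. single (a + b) 1) x y = x * (y :: 'a::monoid_add \<Rightarrow>\<^sub>0 'k::comm_ring_1)"
  by (rule bilinear_eqI[where F = "bilin _" and G = "(*)"]) (auto simp: mult_single)

lemma bilin_single_plus_swap:
  "bilin (\<lambda>a b. single (b + a) 1) x y = y * (x :: 'a::monoid_add \<Rightarrow>\<^sub>0 'k::comm_ring_1)"
  by (rule bilinear_eqI[where F = "bilin _" and G = "\<lambda>x y. y * x"]) (auto simp: mult_single)

text \<open>With concatenation as addition, \<open>ptree list \<Rightarrow>\<^sub>0 'k\<close> is the tensor algebra T(PT) with its
  concatenation product; in the same way \<open>aroma multiset \<Rightarrow>\<^sub>0 'k\<close> is S(PA), and \<open>'k ATPT\<close>, with pairs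
  added componentwise, is the algebra S(PA) \<otimes> T(PT).\<close>

instantiation list :: (type) monoid_add
begin
definition zero_list_def: "0 = []"
definition plus_list_def: "xs + ys = xs @ ys"
instance by standard (simp_all add: zero_list_def plus_list_def)
end

lemma single_mult_single_word: "single u (1::'k::comm_ring_1) * single v 1 = single (u @ v) 1"
  by (simp add: mult_single plus_list_def)

lemma commT_eq: "commT x y = x * y - y * (x :: 'k::field TPT)"
proof -
  have "commT x y = bilin (\<lambda>a b. single (a + b) 1) x y - bilin (\<lambda>a b. single (b + a) 1) x y"
    unfolding commT_def plus_list_def by (rule bilin_minus_fun)
  then show ?thesis by (simp add: bilin_single_plus bilin_single_plus_swap)
qed

lemma mulS_eq: "mulS x y = x * (y :: 'k::field SPA)"
  unfolding mulS_def by (rule bilin_single_plus)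

definition derivation :: "(('a::monoid_add \<Rightarrow>\<^sub>0 'k::comm_ring_1) \<Rightarrow> ('a \<Rightarrow>\<^sub>0 'k)) \<Rightarrow> bool" where
  "derivation D \<longleftrightarrow> lin_map D \<and> (\<forall>x y. D (x * y) = D x * y + x * D y)"

lemma derivation_mult: "derivation D \<Longrightarrow> D (x * y) = D x * y + x * D y"
  by (simp add: derivation_def)

lemma derivation_lin_map: "derivation D \<Longrightarrow> lin_map D"
  by (simp add: derivation_def)

lemma derivationI_single:
  assumes L: "lin_map D"
    and B: "\<And>u v. D (single u 1 * single v 1) = D (single u 1) * single v 1 + single u 1 * D (single v 1)"
  shows "derivation D"
proof -
  have "D (x * y) = D x * y + x * D y" for x y
    by (rule bilinear_eqI[where F = "\<lambda>x y. D (x * y)" and G = "\<lambda>x y. D x * y + x * D y"])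
       (use L B in \<open>auto intro!: lin_map_compose[OF L] lin_map_plus
          lin_map_compose[OF lin_map_mult_left] lin_map_compose[OF lin_map_mult_right]\<close>)
  then show ?thesis using L by (simp add: derivation_def)
qed

lemma derivation_plus: "derivation D1 \<Longrightarrow> derivation D2 \<Longrightarrow> derivation (\<lambda>x. D1 x + D2 x)"
  by (auto simp: derivation_def lin_map_plus algebra_simps)

lemma derivation_minus: "derivation D1 \<Longrightarrow> derivation D2 \<Longrightarrow> derivation (\<lambda>x. D1 x - D2 x)"
  by (auto simp: derivation_def lin_map_minus algebra_simps)

lemma derivation_zero: "derivation (\<lambda>x. 0)"
  by (auto simp: derivation_def lin_map_def)

lemma derivation_smul: "derivation D \<Longrightarrow> derivation (\<lambda>x. smul c (D x))"
  by (auto simp: derivation_def lin_map_def smul_add smul_mult_left smul_mult_right mult.commute)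

lemma derivation_commutator:
  assumes D1: "derivation D1" and D2: "derivation D2"
  shows "derivation (\<lambda>x. D1 (D2 x) - D2 (D1 x))"
  unfolding derivation_def
proof (intro conjI allI)
  have "lin_map D1" "lin_map D2" using D1 D2 by (auto simp: derivation_def)
  then show "lin_map (\<lambda>x. D1 (D2 x) - D2 (D1 x))"
    by (intro lin_map_minus) (rule lin_map_compose, assumption+)+
  fix x y
  show "D1 (D2 (x * y)) - D2 (D1 (x * y)) = (D1 (D2 x) - D2 (D1 x)) * y + x * (D1 (D2 y) - D2 (D1 y))"
    using \<open>lin_map D1\<close> \<open>lin_map D2\<close>
    by (simp add: derivation_mult[OF D1] derivation_mult[OF D2] lin_map_add algebra_simps)
qed

definition graft_sum :: "(ptree \<Rightarrow> ptree list) \<Rightarrow> ptree list \<Rightarrow> 'k::field TPT" where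
  "graft_sum f w = sum_list (map (\<lambda>w'. single w' 1) (graft_at f w))"

lemma triD_single: "triD a (single w 1) = graft_sum (graft a) w"
  by (simp add: triD_def graft_sum_def)

lemma graft_at_append:
  "graft_at f (u @ v) = map (\<lambda>l. l @ v) (graft_at f u) @ map (\<lambda>l. u @ l) (graft_at f v)"
  by (induction u) auto

lemma length_graft_at: "l \<in> set (graft_at f u) \<Longrightarrow> length l = length u"
  by (induction u arbitrary: l) auto

lemma graft_sum_append: "graft_sum f (u @ v) = graft_sum f u * single v 1 + single u 1 * graft_sum f v"
proof -
  have "graft_sum f (u @ v) = sum_list (map (\<lambda>l. single l 1 * single v 1) (graft_at f u))
      + sum_list (map (\<lambda>l. single u 1 * single l 1) (graft_at f v))"
    by (simp add: graft_sum_def graft_at_append o_def single_mult_single_word)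
  then show ?thesis
    by (simp add: graft_sum_def sum_list_mult_const sum_list_const_mult)
qed

lemma lin_map_triD [simp]: "lin_map (triD a)"
  by (simp add: triD_def)

lemma derivation_triD: "derivation (triD a)"
  by (rule derivationI_single) (simp_all add: single_mult_single_word triD_single graft_sum_append)

definition homog :: "nat \<Rightarrow> 'k::field TPT set" where
  "homog n = {x. \<forall>w\<in>keys x. length w = n}"

lemma homog_single: "length w = n \<Longrightarrow> single w c \<in> homog n"
  by (simp add: homog_def)

lemma homog_lin: "(\<And>a. a \<in> keys x \<Longrightarrow> f a \<in> homog n) \<Longrightarrow> lin f x \<in> homog n"
  using keys_lin[of f x] by (fastforce simp: homog_def)

lemma homog_oneE:
  assumes "x \<in> homog 1" "w \<in> keys x"
  obtains t where "w = [t]"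
  using assms by (auto simp: homog_def length_Suc_conv)

lemma keys_sum_list_single: "keys (sum_list (map (\<lambda>w. single w (1::'k::comm_ring_1)) l)) \<subseteq> set l"
proof (induction l)
  case (Cons a l)
  then show ?case using keys_add[of "single a (1::'k)" "sum_list (map (\<lambda>w. single w 1) l)"] by auto
qed simp

lemma triD_homog: "x \<in> homog n \<Longrightarrow> triD a x \<in> homog n"
  unfolding triD_def
proof (rule homog_lin)
  fix w assume "x \<in> homog n" "w \<in> keys x"
  then have "length w = n" by (simp add: homog_def)
  then show "sum_list (map (\<lambda>w'. single w' 1) (graft_at (graft a) w)) \<in> homog n"
    using keys_sum_list_single length_graft_at by (fastforce simp: homog_def)
qed

section \<open>Homogeneous Lie polynomials\<close>

abbreviation letter :: "ptree \<Rightarrow> 'k::field TPT" where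
  "letter t \<equiv> single [t] 1"

lemma LiePT_bracket: "x \<in> LiePT \<Longrightarrow> y \<in> LiePT \<Longrightarrow> x * y - y * x \<in> LiePT"
  using LiePT.comm[of x y] by (simp add: commT_eq)

inductive lie_deg :: "nat \<Rightarrow> 'k::field TPT \<Rightarrow> bool" where
  letter: "lie_deg 1 (letter t)"
| zero: "lie_deg n 0"
| add: "lie_deg n x \<Longrightarrow> lie_deg n y \<Longrightarrow> lie_deg n (x + y)"
| smul: "lie_deg n x \<Longrightarrow> lie_deg n (smul c x)"
| bracket: "lie_deg m x \<Longrightarrow> lie_deg n y \<Longrightarrow> lie_deg (m + n) (x * y - y * x)"

lemma lie_deg_diff: "lie_deg n x \<Longrightarrow> lie_deg n y \<Longrightarrow> lie_deg n (x - y)"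
  using lie_deg.add[of n x "smul (-1) y"] lie_deg.smul[of n y "-1"] by (simp add: smul_minus_one)

lemma lie_deg_sum: "(\<And>i. i \<in> I \<Longrightarrow> lie_deg n (g i)) \<Longrightarrow> lie_deg n (sum g I)"
  by (induction I rule: infinite_finite_induct) (auto intro: lie_deg.zero lie_deg.add)

lemma lie_deg_lin: "(\<And>a. a \<in> keys x \<Longrightarrow> lie_deg n (f a)) \<Longrightarrow> lie_deg n (lin f x)"
  unfolding lin_def by (intro lie_deg_sum lie_deg.smul) auto

lemma homog_one_lie_deg:
  assumes "x \<in> homog 1"
  shows "lie_deg 1 x"
proof -
  have "lie_deg 1 (single w 1)" if "w \<in> keys x" for w
    using homog_oneE[OF assms that] lie_deg.letter by metis
  then show ?thesis
    by (subst lin_map_eq_lin[OF lin_map_ident]) (rule lie_deg_lin)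
qed

lemma lie_deg_zero_eq: "lie_deg 0 x \<Longrightarrow> x = 0"
proof -
  have "lie_deg n x \<Longrightarrow> n = 0 \<Longrightarrow> x = 0" for n x
    by (induction rule: lie_deg.induct) auto
  then show "lie_deg 0 x \<Longrightarrow> x = 0" by blast
qed

lemma lie_deg_LiePT: "lie_deg n x \<Longrightarrow> x \<in> LiePT"
  by (induction rule: lie_deg.induct) (auto intro: LiePT.intros LiePT_bracket)

lemma triD_lie_deg: "lie_deg n x \<Longrightarrow> lie_deg n (triD a x)"
proof (induction rule: lie_deg.induct)
  case (letter t)
  show ?case by (intro homog_one_lie_deg triD_homog homog_single) simp
next
  case (bracket m x n y)
  have "triD a (x * y - y * x) = (triD a x * y - y * triD a x) + (x * triD a y - triD a y * x)"
    by (simp add: lin_map_diff derivation_mult[OF derivation_triD])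
  then show ?case
    using bracket by (auto intro: lie_deg.add lie_deg.bracket)
qed (simp_all add: lin_map_zero lin_map_add lin_map_smul lie_deg.intros)

inductive lie_sum :: "'k::field TPT \<Rightarrow> bool" where
  "lie_deg n x \<Longrightarrow> lie_sum x"
| "lie_sum x \<Longrightarrow> lie_sum y \<Longrightarrow> lie_sum (x + y)"

lemma lie_sum_smul: "lie_sum x \<Longrightarrow> lie_sum (smul c x)"
  by (induction rule: lie_sum.induct) (auto simp: smul_add intro: lie_sum.intros lie_deg.smul)

lemma lie_sum_bracket:
  assumes "lie_sum x" "lie_sum y"
  shows "lie_sum (x * y - y * x)"
proof -
  have homogeneous: "lie_sum (x * y - y * x)" if "lie_deg m x" for m x
    using \<open>lie_sum y\<close>
  proof (induction rule: lie_sum.induct)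
    case (1 n y)
    show ?case by (rule lie_sum.intros(1)[OF lie_deg.bracket[OF that 1]])
  next
    case (2 y z)
    have "x * (y + z) - (y + z) * x = (x * y - y * x) + (x * z - z * x)" by (simp add: algebra_simps)
    then show ?case using 2 by (simp add: lie_sum.intros)
  qed
  show ?thesis
    using \<open>lie_sum x\<close>
  proof (induction rule: lie_sum.induct)
    case (1 n x)
    then show ?case by (rule homogeneous)
  next
    case (2 x z)
    have "(x + z) * y - y * (x + z) = (x * y - y * x) + (z * y - y * z)" by (simp add: algebra_simps)
    then show ?case using 2 by (simp add: lie_sum.intros)
  qed
qed

lemma LiePT_lie_sum: "x \<in> LiePT \<Longrightarrow> lie_sum x"
  by (induction rule: LiePT.induct)
    (auto simp: commT_eq intro: lie_sum.intros lie_deg.intros lie_sum_smul lie_sum_bracket)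

lemma LiePT_degree_induct [consumes 1, case_names zero add smul letter bracket]:
  assumes "x \<in> LiePT"
    and zero: "P 0"
    and add: "\<And>x y. P x \<Longrightarrow> P y \<Longrightarrow> P (x + y)"
    and smul: "\<And>c x. P x \<Longrightarrow> P (smul c x)"
    and letter: "\<And>t. P (letter t)"
    and bracket: "\<And>m n x y. lie_deg m x \<Longrightarrow> lie_deg n y \<Longrightarrow> 0 < m \<Longrightarrow> 0 < n \<Longrightarrow> P x \<Longrightarrow> P y
      \<Longrightarrow> (\<And>k z. k < m + n \<Longrightarrow> lie_deg k z \<Longrightarrow> P z) \<Longrightarrow> P (x * y - y * x)"
  shows "P x"
proof -
  have step: "lie_deg n y \<Longrightarrow> (\<And>k z. k < n \<Longrightarrow> lie_deg k z \<Longrightarrow> P z) \<Longrightarrow> P y" for n y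
  proof (induction rule: lie_deg.induct)
    case (bracket m x n y)
    show ?case
    proof (cases "m = 0 \<or> n = 0")
      case True
      then have "x = 0 \<or> y = 0" using lie_deg_zero_eq bracket.hyps by blast
      then show ?thesis using zero by auto
    next
      case False
      have "P x" by (rule bracket.IH(1), rule bracket.prems) simp_all
      moreover have "P y" by (rule bracket.IH(2), rule bracket.prems) simp_all
      ultimately show ?thesis
        using False bracket.hyps bracket.prems by (intro assms(6)) auto
    qed
  qed (use zero add smul letter in blast)+
  have deg: "lie_deg n y \<Longrightarrow> P y" for n y
    by (induction n arbitrary: y rule: less_induct) (use step in blast)
  from \<open>x \<in> LiePT\<close> have "lie_sum x" by (rule LiePT_lie_sum)
  then show "P x" by induction (auto intro: deg add)
qed

section \<open>Extending an action of trees to words\<close>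

primrec act_wordn :: "(ptree \<Rightarrow> ('b \<Rightarrow>\<^sub>0 'k::field) \<Rightarrow> ('b \<Rightarrow>\<^sub>0 'k)) \<Rightarrow> nat \<Rightarrow> ptree list \<Rightarrow> ('b \<Rightarrow>\<^sub>0 'k) \<Rightarrow> ('b \<Rightarrow>\<^sub>0 'k)" where
  "act_wordn A 0 w Z = Z"
| "act_wordn A (Suc n) w Z = (case w of [] \<Rightarrow> Z | a # v \<Rightarrow>
      A a (act_wordn A n v Z) - lin (\<lambda>v'. act_wordn A n v' Z) (triD a (single v 1)))"

definition act :: "(ptree \<Rightarrow> ('b \<Rightarrow>\<^sub>0 'k::field) \<Rightarrow> ('b \<Rightarrow>\<^sub>0 'k)) \<Rightarrow> 'k TPT \<Rightarrow> ('b \<Rightarrow>\<^sub>0 'k) \<Rightarrow> ('b \<Rightarrow>\<^sub>0 'k)" where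
  "act A x Z = lin (\<lambda>w. act_wordn A (length w) w Z) x"

lemma triW_eq_act: "triW w Z = act triD (single w 1) Z"
proof -
  have "triWn n w Z = act_wordn triD n w Z" for n w
    by (induction n arbitrary: w) (auto split: list.splits)
  then show ?thesis by (simp add: triW_def act_def)
qed

lemma rhoW_eq_act: "rhoW w Z = act rho1 (single w 1) Z"
proof -
  have "rhoWn n w Z = act_wordn rho1 n w Z" for n w
    by (induction n arbitrary: w) (auto split: list.splits)
  then show ?thesis by (simp add: rhoW_def act_def)
qed

lemma lin_map_act_left [simp]: "lin_map (\<lambda>x. act A x Z)"
  by (simp add: act_def)

lemma act_zero: "act A 0 Z = 0"
  by (simp add: act_def)

lemma act_add: "act A (x + y) Z = act A x Z + act A y Z"
  by (rule lin_map_add[OF lin_map_act_left])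

lemma act_diff: "act A (x - y) Z = act A x Z - act A y Z"
  by (rule lin_map_diff[OF lin_map_act_left])

lemma act_smul: "act A (smul c x) Z = smul c (act A x Z)"
  by (rule lin_map_smul[OF lin_map_act_left])

lemma act_single: "act A (single w 1) Z = act_wordn A (length w) w Z"
  by (simp add: act_def)

definition act_mult :: "(ptree \<Rightarrow> ('b \<Rightarrow>\<^sub>0 'k::field) \<Rightarrow> ('b \<Rightarrow>\<^sub>0 'k)) \<Rightarrow> 'k TPT \<Rightarrow> bool" where
  "act_mult A y \<longleftrightarrow> (\<forall>z Z. act A (y * z) Z = act A y (act A z Z) - act A (act triD y z) Z)"

lemma act_multD: "act_mult A y \<Longrightarrow> act A (y * z) Z = act A y (act A z Z) - act A (act triD y z) Z"
  by (simp add: act_mult_def)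

lemma act_letter: "act A (letter a) Z = A a Z"
  by (simp add: act_single triD_single graft_sum_def)

lemma act_cons:
  fixes A :: "ptree \<Rightarrow> ('b \<Rightarrow>\<^sub>0 'k::field) \<Rightarrow> ('b \<Rightarrow>\<^sub>0 'k)"
  shows "act A (single (a # v) 1) Z = A a (act A (single v 1) Z) - act A (triD a (single v 1)) Z"
proof -
  have "lin (\<lambda>v'. act_wordn A (length v) v' Z) (triD a (single v 1)) = act A (triD a (single v 1)) Z"
    unfolding act_def
  proof (rule lin_cong)
    fix v' assume "v' \<in> keys (triD a (single v (1::'k)))"
    moreover have "triD a (single v (1::'k)) \<in> homog (length v)"
      by (intro triD_homog homog_single) simp
    ultimately have "length v' = length v" by (simp add: homog_def)
    then show "act_wordn A (length v) v' Z = act_wordn A (length v') v' Z" by simp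
  qed
  then show ?thesis by (simp add: act_single)
qed

lemma act_bracket:
  assumes "act_mult A x" "act_mult A y"
  shows "act A (x * y - y * x) Z
    = act A x (act A y Z) - act A (act triD x y) Z - act A y (act A x Z) + act A (act triD y x) Z"
  using act_multD[OF assms(1), of y] act_multD[OF assms(2), of x] by (simp add: act_diff)

locale tree_action =
  fixes A :: "ptree \<Rightarrow> ('b \<Rightarrow>\<^sub>0 'k::field) \<Rightarrow> ('b \<Rightarrow>\<^sub>0 'k)"
  assumes lin_map_A: "lin_map (A a)"
begin

lemma lin_map_act_wordn: "lin_map (act_wordn A n w)"
proof (induction n arbitrary: w)
  case 0
  then show ?case by simp
next
  case (Suc n)
  show ?case
  proof (cases w)
    case Nil
    then show ?thesis by simp
  next
    case (Cons a v)
    have "lin_map (\<lambda>Z. A a (act_wordn A n v Z) - lin (\<lambda>v'. act_wordn A n v' Z) (triD a (single v 1)))"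
      by (intro lin_map_minus lin_map_compose[OF lin_map_A Suc.IH] lin_map_lin_fun Suc.IH)
    then show ?thesis using Cons by simp
  qed
qed

lemma lin_map_act [simp]: "lin_map (act A x)"
  unfolding act_def[abs_def] by (intro lin_map_lin_fun lin_map_act_wordn)

lemma act_letter_mult: "act A (letter a * z) Z = A a (act A z Z) - act A (triD a z) Z"
proof -
  have "(\<lambda>z. act A (letter a * z) Z) = (\<lambda>z. A a (act A z Z) - act A (triD a z) Z)"
  proof (rule lin_map_eqI)
    show "lin_map (\<lambda>z. act A (letter a * z) Z)"
      by (rule lin_map_compose[OF lin_map_act_left lin_map_mult_right])
    show "lin_map (\<lambda>z. A a (act A z Z) - act A (triD a z) Z)"
      by (intro lin_map_minus lin_map_compose[OF lin_map_A lin_map_act_left]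
          lin_map_compose[OF lin_map_act_left lin_map_triD])
    show "act A (letter a * single v 1) Z = A a (act A (single v 1) Z) - act A (triD a (single v 1)) Z" for v
      by (simp add: single_mult_single_word act_cons)
  qed
  then show ?thesis by metis
qed

lemma act_mult_letter: "act_mult A (letter t)"
  by (simp add: act_mult_def act_letter_mult act_letter)

lemma act_mult_zero: "act_mult A 0"
  by (simp add: act_mult_def act_zero lin_map_zero[OF lin_map_act])

lemma act_mult_add: "act_mult A x \<Longrightarrow> act_mult A y \<Longrightarrow> act_mult A (x + y)"
  by (simp add: act_mult_def distrib_right act_add)

lemma act_mult_smul: "act_mult A x \<Longrightarrow> act_mult A (smul c x)"
  by (simp add: act_mult_def smul_mult_left act_smul smul_diff)

text \<open>Expanding \<open>act (x (y z))\<close> produces two terms symmetric in \<open>x, y\<close>, which cancel in the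
  commutator.\<close>

lemma act_mult_bracket:
  assumes graft_x: "act_mult triD x" "derivation (act triD x)"
    and graft_y: "act_mult triD y" "derivation (act triD y)"
    and mult: "act_mult A x" "act_mult A y" "act_mult A (act triD x y)" "act_mult A (act triD y x)"
  shows "act_mult A (x * y - y * x)"
  unfolding act_mult_def
proof (intro allI)
  fix z Z
  let ?O = "act A" and ?W = "act triD"
  have expand: "?O (u * (v * z)) Z = ?O u (?O v (?O z Z)) - ?O u (?O (?W v z) Z)
      - ?O (?W u v) (?O z Z) + ?O (?W (?W u v) z) Z - ?O v (?O (?W u z) Z) + ?O (?W v (?W u z)) Z"
    if "act_mult A u" "act_mult A v" "act_mult A (?W u v)" "derivation (?W u)" for u v
    using that by (simp add: act_multD derivation_mult act_add act_diff lin_map_diff[OF lin_map_act])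
  have "?O ((x * y - y * x) * z) Z = ?O (x * (y * z)) Z - ?O (y * (x * z)) Z"
    by (simp add: left_diff_distrib mult.assoc act_diff)
  also have "\<dots> = ?O (x * y - y * x) (?O z Z) - ?O (?W (x * y - y * x) z) Z"
    using expand[of x y] expand[of y x] graft_x graft_y mult
    by (simp add: act_multD act_diff act_add)
  finally show "?O ((x * y - y * x) * z) Z = ?O (x * y - y * x) (?O z Z) - ?O (?W (x * y - y * x) z) Z" .
qed

end

locale derivation_action = tree_action A for A :: "ptree \<Rightarrow> ('b::monoid_add \<Rightarrow>\<^sub>0 'k::field) \<Rightarrow> ('b \<Rightarrow>\<^sub>0 'k)" +
  assumes derivation_A: "derivation (A a)"
begin

definition act_mult_der :: "'k TPT \<Rightarrow> bool" where
  "act_mult_der y \<longleftrightarrow> act_mult A y \<and> derivation (act A y)"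

lemma act_mult_der_letter: "act_mult_der (letter t)"
  using derivation_A by (simp add: act_mult_der_def act_mult_letter act_letter[abs_def])

lemma act_mult_der_zero: "act_mult_der 0"
  using derivation_zero by (simp add: act_mult_der_def act_mult_zero act_zero[abs_def])

lemma act_mult_der_add: "act_mult_der x \<Longrightarrow> act_mult_der y \<Longrightarrow> act_mult_der (x + y)"
  by (simp add: act_mult_der_def act_mult_add act_add[abs_def] derivation_plus)

lemma act_mult_der_smul: "act_mult_der x \<Longrightarrow> act_mult_der (smul c x)"
  by (simp add: act_mult_der_def act_mult_smul act_smul[abs_def] derivation_smul)

lemma act_mult_der_bracket:
  assumes graft_x: "act_mult triD x" "derivation (act triD x)"
    and graft_y: "act_mult triD y" "derivation (act triD y)"
    and md: "act_mult_der x" "act_mult_der y" "act_mult_der (act triD x y)" "act_mult_der (act triD y x)"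
  shows "act_mult_der (x * y - y * x)"
proof -
  have mult: "act_mult A x" "act_mult A y" "act_mult A (act triD x y)" "act_mult A (act triD y x)"
    and der: "derivation (act A x)" "derivation (act A y)"
      "derivation (act A (act triD x y))" "derivation (act A (act triD y x))"
    using md by (simp_all add: act_mult_der_def)
  have "act A (x * y - y * x) = (\<lambda>Z. act A x (act A y Z) - act A y (act A x Z)
      - act A (act triD x y) Z + act A (act triD y x) Z)"
    by (rule ext) (simp add: act_bracket[OF mult(1,2)])
  then have "derivation (act A (x * y - y * x))"
    by (simp add: derivation_plus derivation_minus derivation_commutator der)
  then show ?thesis
    by (simp add: act_mult_der_def act_mult_bracket[OF graft_x graft_y mult])
qed

end

interpretation graft: derivation_action triD
  by standard (simp_all add: derivation_triD)

definition preserves_lie_deg :: "('k::field TPT \<Rightarrow> 'k TPT) \<Rightarrow> bool" where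
  "preserves_lie_deg f \<longleftrightarrow> (\<forall>k z. lie_deg k z \<longrightarrow> lie_deg k (f z))"

text \<open>Both properties must be proved together: the step for a bracket \<open>[x, y]\<close> needs them for the
  elements \<open>x \<rhd> y\<close> and \<open>y \<rhd> x\<close>, which are Lie polynomials of lower degree only by preservation.\<close>

lemma graft_LiePT:
  assumes "x \<in> LiePT"
  shows "graft.act_mult_der x \<and> preserves_lie_deg (act triD x)"
  using assms
proof (induction rule: LiePT_degree_induct)
  case zero
  then show ?case
    by (simp add: graft.act_mult_der_zero preserves_lie_deg_def act_zero lie_deg.zero)
next
  case (add x y)
  then show ?case
    by (simp add: graft.act_mult_der_add preserves_lie_deg_def act_add lie_deg.add)
next
  case (smul c x)
  then show ?case
    by (simp add: graft.act_mult_der_smul preserves_lie_deg_def act_smul lie_deg.smul)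
next
  case (letter t)
  then show ?case
    by (simp add: graft.act_mult_der_letter preserves_lie_deg_def act_letter triD_lie_deg)
next
  case (bracket m n x y)
  have x: "graft.act_mult_der x" "preserves_lie_deg (act triD x)"
    and y: "graft.act_mult_der y" "preserves_lie_deg (act triD y)"
    using bracket(5,6) by simp_all
  have "lie_deg n (act triD x y)" "lie_deg m (act triD y x)"
    using x(2) y(2) bracket(1,2) by (simp_all add: preserves_lie_deg_def)
  then have xy: "graft.act_mult_der (act triD x y)" "preserves_lie_deg (act triD (act triD x y))"
    and yx: "graft.act_mult_der (act triD y x)" "preserves_lie_deg (act triD (act triD y x))"
    using bracket(3,4) bracket(7)[of n "act triD x y"] bracket(7)[of m "act triD y x"] by simp_all
  have "graft.act_mult_der (x * y - y * x)"
    using x(1) y(1) xy(1) yx(1)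
    by (intro graft.act_mult_der_bracket) (simp_all add: graft.act_mult_der_def)
  moreover have "preserves_lie_deg (act triD (x * y - y * x))"
    using x y xy yx
    by (auto simp: preserves_lie_deg_def graft.act_mult_der_def act_bracket
        intro!: lie_deg.add lie_deg_diff)
  ultimately show ?case ..
qed

lemma act_mult_graft: "x \<in> LiePT \<Longrightarrow> act_mult triD x"
  using graft_LiePT[of x] by (simp add: graft.act_mult_der_def)

lemma derivation_act_graft: "x \<in> LiePT \<Longrightarrow> derivation (act triD x)"
  using graft_LiePT[of x] by (simp add: graft.act_mult_der_def)

lemma act_graft_lie_deg: "x \<in> LiePT \<Longrightarrow> lie_deg k z \<Longrightarrow> lie_deg k (act triD x z)"
  using graft_LiePT[of x] by (simp add: preserves_lie_deg_def)

lemma act_graft_LiePT: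
  assumes "x \<in> LiePT" "z \<in> LiePT"
  shows "act triD x z \<in> LiePT"
proof -
  have "lie_sum z" using assms(2) by (rule LiePT_lie_sum)
  then show ?thesis
    by induction (auto simp: lin_map_add[OF graft.lin_map_act] intro: LiePT.add lie_deg_LiePT
        act_graft_lie_deg[OF assms(1)])
qed

context derivation_action
begin

lemma act_mult_der_LiePT: "x \<in> LiePT \<Longrightarrow> act_mult_der x"
proof (induction rule: LiePT_degree_induct)
  case (bracket m n x y)
  have x: "x \<in> LiePT" and y: "y \<in> LiePT" using bracket(1,2) by (simp_all add: lie_deg_LiePT)
  have "act_mult_der (act triD x y)"
    using bracket(3) by (intro bracket(7)[OF _ act_graft_lie_deg[OF x bracket(2)]]) simp
  moreover have "act_mult_der (act triD y x)"
    using bracket(4) by (intro bracket(7)[OF _ act_graft_lie_deg[OF y bracket(1)]]) simp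
  ultimately show ?case
    using bracket(5,6) x y
    by (intro act_mult_der_bracket act_mult_graft derivation_act_graft) auto
qed (simp_all add: act_mult_der_zero act_mult_der_add act_mult_der_smul act_mult_der_letter)

end

section \<open>The action of trees on aromas\<close>

definition graft_aroma_sum :: "ptree \<Rightarrow> aroma \<Rightarrow> 'k::field SPA" where
  "graft_aroma_sum t a = sum_list (map (\<lambda>a'. single {#a'#} 1) (graft_aroma t a))"

definition rho1_monomial :: "ptree \<Rightarrow> aroma multiset \<Rightarrow> 'k::field SPA" where
  "rho1_monomial t \<alpha> = (\<Sum>a \<in># \<alpha>. single (\<alpha> - {#a#}) 1 * graft_aroma_sum t a)"

lemma rho1_single: "rho1 t (single \<alpha> 1) = (rho1_monomial t \<alpha> :: 'k::field SPA)"
  by (simp add: rho1_def rho1_monomial_def graft_aroma_sum_def mult_single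
      sum_list_const_mult[symmetric] o_def)

lemma rho1_monomial_add:
  "rho1_monomial t (\<alpha> + \<beta>) = rho1_monomial t \<alpha> * single \<beta> 1 + single \<alpha> 1 * (rho1_monomial t \<beta> :: 'k::field SPA)"
proof -
  let ?g = "graft_aroma_sum t :: aroma \<Rightarrow> 'k SPA"
  have "(\<Sum>a \<in># \<alpha>. single (\<alpha> + \<beta> - {#a#}) 1 * ?g a) = (\<Sum>a \<in># \<alpha>. single (\<alpha> - {#a#}) 1 * ?g a * single \<beta> 1)"
  proof (rule arg_cong[where f = sum_mset], rule image_mset_cong)
    fix a assume "a \<in># \<alpha>"
    then have "\<alpha> + \<beta> - {#a#} = (\<alpha> - {#a#}) + \<beta>"
      by (metis add.commute diff_union_single_conv)
    moreover have "single ((\<alpha> - {#a#}) + \<beta>) (1::'k) = single (\<alpha> - {#a#}) 1 * single \<beta> 1"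
      by (simp add: mult_single)
    ultimately show "single (\<alpha> + \<beta> - {#a#}) 1 * ?g a = single (\<alpha> - {#a#}) 1 * ?g a * single \<beta> 1"
      by (simp add: ac_simps)
  qed
  moreover have "(\<Sum>a \<in># \<beta>. single (\<alpha> + \<beta> - {#a#}) 1 * ?g a) = (\<Sum>a \<in># \<beta>. single \<alpha> 1 * (single (\<beta> - {#a#}) 1 * ?g a))"
  proof (rule arg_cong[where f = sum_mset], rule image_mset_cong)
    fix a assume "a \<in># \<beta>"
    then have "\<alpha> + \<beta> - {#a#} = \<alpha> + (\<beta> - {#a#})"
      by (rule diff_union_single_conv)
    moreover have "single (\<alpha> + (\<beta> - {#a#})) (1::'k) = single \<alpha> 1 * single (\<beta> - {#a#}) 1"
      by (simp add: mult_single)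
    ultimately show "single (\<alpha> + \<beta> - {#a#}) 1 * ?g a = single \<alpha> 1 * (single (\<beta> - {#a#}) 1 * ?g a)"
      by (simp add: ac_simps)
  qed
  ultimately show ?thesis
    by (simp add: rho1_monomial_def sum_mset_distrib_left sum_mset_distrib_right)
qed

lemma derivation_rho1: "derivation (rho1 t :: 'k::field SPA \<Rightarrow> 'k SPA)"
proof (rule derivationI_single)
  show "lin_map (rho1 t :: 'k SPA \<Rightarrow> 'k SPA)" by (simp add: rho1_def)
  fix u v
  show "rho1 t (single u 1 * single v 1) = rho1 t (single u 1) * single v 1 + single u 1 * (rho1 t (single v 1) :: 'k SPA)"
    by (simp add: mult_single rho1_single rho1_monomial_add)
qed

interpretation rho: derivation_action rho1
  by standard (simp_all add: derivation_rho1 derivation_lin_map)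

section \<open>The post-Lie algebra APT\<close>

lemma lin_map_tens_left [simp]: "lin_map (\<lambda>\<alpha>. tens \<alpha> x)"
  by (simp add: tens_def)

lemma lin_map_tens_right [simp]: "lin_map (tens \<alpha>)"
  unfolding tens_def by (rule lin_map_bilin_right)

lemma tens_single: "tens (single m 1) (single w 1) = (single (m, w) 1 :: 'k::field ATPT)"
  by (simp add: tens_def)

lemma tens_mult: "tens \<alpha> x * tens \<beta> y = tens (\<alpha> * \<beta>) (x * y :: 'k::field TPT)"
proof (rule bilinear_eqI[where F = "\<lambda>\<alpha> x. tens \<alpha> x * tens \<beta> y" and G = "\<lambda>\<alpha> x. tens (\<alpha> * \<beta>) (x * y)"])
  fix m w
  show "tens (single m 1) (single w 1) * tens \<beta> y = tens (single m 1 * \<beta>) (single w 1 * y)"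
  proof (rule bilinear_eqI[where F = "\<lambda>\<beta> y. tens (single m 1) (single w 1) * tens \<beta> y"
        and G = "\<lambda>\<beta> y. tens (single m 1 * \<beta>) (single w 1 * y)"])
    show "tens (single m 1) (single w 1) * tens (single m' 1) (single w' 1)
        = tens (single m 1 * single m' 1) (single w 1 * (single w' 1 :: 'k TPT))" for m' w'
      by (simp add: tens_single mult_single plus_prod_def)
  qed (auto intro!: lin_map_compose[OF lin_map_mult_right] lin_map_compose[OF lin_map_tens_left]
      lin_map_compose[OF lin_map_tens_right])
qed (auto intro!: lin_map_compose[OF lin_map_mult_left] lin_map_compose[OF lin_map_tens_left]
    lin_map_compose[OF lin_map_tens_right])

lemmas tens_linear =
  lin_map_add[OF lin_map_tens_left] lin_map_add[OF lin_map_tens_right]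
  lin_map_diff[OF lin_map_tens_left] lin_map_diff[OF lin_map_tens_right]

lemma brA_eq: "brA X Y = X * Y - Y * (X :: 'k::field ATPT)"
proof -
  have "(\<lambda>(m1::aroma multiset, w1::ptree list) (m2, w2). single (m1 + m2, w1 @ w2) (1::'k) - single (m1 + m2, w2 @ w1) 1)
      = (\<lambda>a b. single (a + b) 1 - single (b + a) 1)"
    by (auto simp: fun_eq_iff plus_prod_def plus_list_def add.commute)
  then show ?thesis
    by (simp add: brA_def bilin_minus_fun bilin_single_plus bilin_single_plus_swap)
qed

lemma brA_add_left: "brA (X + Y) Z = brA X Z + brA Y Z"
  and brA_add_right: "brA Z (X + Y) = brA Z X + brA Z Y"
  and brA_smul_left: "brA (smul c X) Y = smul c (brA X Y)"
  and brA_smul_right: "brA X (smul c Y) = smul c (brA X Y)"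
  by (simp_all add: brA_eq algebra_simps smul_mult_left smul_mult_right smul_diff)

lemma brA_zero_left [simp]: "brA 0 X = 0"
  and brA_zero_right [simp]: "brA X 0 = 0"
  by (simp_all add: brA_eq)

lemma lin_map_triA_left: "lin_map (\<lambda>X. triA X Y)"
  and lin_map_triA_right: "lin_map (triA X)"
  by (simp_all add: triA_def)

lemma triA_add_left: "triA (X + Y) Z = triA X Z + triA Y Z"
  and triA_add_right: "triA Z (X + Y) = triA Z X + triA Z Y"
  and triA_diff_left: "triA (X - Y) Z = triA X Z - triA Y Z"
  and triA_smul_left: "triA (smul c X) Y = smul c (triA X Y)"
  and triA_smul_right: "triA X (smul c Y) = smul c (triA X Y)"
  by (simp_all add: lin_map_add[OF lin_map_triA_left] lin_map_add[OF lin_map_triA_right]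
      lin_map_diff[OF lin_map_triA_left] lin_map_smul[OF lin_map_triA_left] lin_map_smul[OF lin_map_triA_right])

lemma triA_zero_left [simp]: "triA 0 X = 0"
  and triA_zero_right [simp]: "triA X 0 = 0"
  by (simp_all add: lin_map_zero[OF lin_map_triA_left] lin_map_zero[OF lin_map_triA_right])

lemma triA_tens:
  "triA (tens \<alpha> x) (tens \<beta> y) = tens (\<alpha> * act rho1 x \<beta>) y + tens (\<alpha> * \<beta>) (act triD x (y :: 'k::field TPT))"
proof (rule bilinear_eqI[where F = "\<lambda>\<alpha> x. triA (tens \<alpha> x) (tens \<beta> y)"
      and G = "\<lambda>\<alpha> x. tens (\<alpha> * act rho1 x \<beta>) y + tens (\<alpha> * \<beta>) (act triD x y)"])
  fix m1 w1
  show "triA (tens (single m1 1) (single w1 1)) (tens \<beta> y)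
      = tens (single m1 1 * act rho1 (single w1 1) \<beta>) y + tens (single m1 1 * \<beta>) (act triD (single w1 1) y)"
  proof (rule bilinear_eqI[where F = "\<lambda>\<beta> y. triA (tens (single m1 1) (single w1 1)) (tens \<beta> y)"
        and G = "\<lambda>\<beta> y. tens (single m1 1 * act rho1 (single w1 1) \<beta>) y + tens (single m1 1 * \<beta>) (act triD (single w1 1) y)"])
    show "triA (tens (single m1 1) (single w1 1)) (tens (single m2 1) (single w2 1)) =
        tens (single m1 1 * act rho1 (single w1 1) (single m2 1)) (single w2 1)
        + tens (single m1 1 * single m2 1) (act triD (single w1 1) (single w2 (1::'k)))" for m2 w2
      by (simp add: tens_single triA_def mulS_eq rhoW_eq_act triW_eq_act mult_single)
  qed (auto intro!: lin_map_plus lin_map_compose[OF lin_map_tens_left] lin_map_compose[OF lin_map_tens_right]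
      lin_map_compose[OF lin_map_triA_right] lin_map_compose[OF lin_map_mult_right]
      lin_map_compose[OF graft.lin_map_act] lin_map_compose[OF rho.lin_map_act])
qed (auto intro!: lin_map_plus lin_map_compose[OF lin_map_tens_left] lin_map_compose[OF lin_map_tens_right]
    lin_map_compose[OF lin_map_triA_left] lin_map_compose[OF lin_map_mult_left]
    lin_map_compose[OF lin_map_mult_right] lin_map_compose[OF lin_map_act_left])

lemma brA_tens: "brA (tens \<alpha> x) (tens \<beta> y) = tens (\<alpha> * \<beta>) (x * y - y * (x :: 'k::field TPT))"
  by (simp add: brA_eq tens_mult tens_linear mult.commute)

lemma triA_brA_tens:
  fixes x y z :: "'k::field TPT"
  assumes "x \<in> LiePT"
  shows "triA (tens \<alpha> x) (brA (tens \<beta> y) (tens \<gamma> z)) =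
    brA (triA (tens \<alpha> x) (tens \<beta> y)) (tens \<gamma> z) + brA (tens \<beta> y) (triA (tens \<alpha> x) (tens \<gamma> z))"
proof -
  have "act triD x (u * v) = act triD x u * v + u * act triD x v" for u v
    using derivation_mult[OF derivation_act_graft[OF assms]] .
  moreover have "act rho1 x (u * v) = act rho1 x u * v + u * act rho1 x v" for u v
    using rho.act_mult_der_LiePT[OF assms] by (simp add: rho.act_mult_der_def derivation_mult)
  ultimately show ?thesis
    by (simp add: brA_eq tens_linear tens_mult lin_map_diff[OF lin_map_triA_right] triA_tens
        algebra_simps)
qed

lemma brA_triA_tens:
  fixes x y z :: "'k::field TPT"
  assumes x: "x \<in> LiePT" and y: "y \<in> LiePT"
  shows "triA (brA (tens \<alpha> x) (tens \<beta> y)) (tens \<gamma> z) =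
    triA (tens \<alpha> x) (triA (tens \<beta> y) (tens \<gamma> z)) - triA (triA (tens \<alpha> x) (tens \<beta> y)) (tens \<gamma> z)
    - triA (tens \<beta> y) (triA (tens \<alpha> x) (tens \<gamma> z)) + triA (triA (tens \<beta> y) (tens \<alpha> x)) (tens \<gamma> z)"
proof -
  have rho: "act rho1 u (v * w) = act rho1 u v * w + v * act rho1 u w"
    "act rho1 (u * v') Q = act rho1 u (act rho1 v' Q) - act rho1 (act triD u v') Q"
    if "u \<in> LiePT" for u v v' w Q
    using rho.act_mult_der_LiePT[OF that]
    by (simp_all add: rho.act_mult_der_def derivation_mult act_multD)
  have graft: "act triD (u * v) Q = act triD u (act triD v Q) - act triD (act triD u v) Q"
    if "u \<in> LiePT" for u v Q
    using act_multD[OF act_mult_graft[OF that]] .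
  show ?thesis
    by (simp add: brA_eq tens_linear tens_mult triA_diff_left triA_add_left triA_add_right triA_tens
        rho[OF x] rho[OF y] graft[OF x] graft[OF y] act_diff algebra_simps)
qed

lemma slice_tens: "slice m (tens \<alpha> x) = smul (lookup \<alpha> m) (x :: 'k::field TPT)"
proof (rule bilinear_eqI[where F = "\<lambda>\<alpha> x. slice m (tens \<alpha> x)" and G = "\<lambda>\<alpha> x. smul (lookup \<alpha> m) x"])
  show "slice m (tens (single m' 1) (single w 1)) = smul (lookup (single m' 1) m) (single w (1::'k))" for m' w
    by (simp add: tens_single slice_def lookup_single when_def)
qed (auto simp: slice_def lookup_add smul_add_left smul_add mult.commute
      intro!: lin_mapI lin_map_compose[OF lin_map_lin lin_map_tens_left]
      lin_map_compose[OF lin_map_lin lin_map_tens_right])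

lemma APT_add: "X \<in> APT \<Longrightarrow> Y \<in> APT \<Longrightarrow> X + Y \<in> APT"
  by (simp add: APT_def slice_def lin_add LiePT.add)

lemma APT_smul: "X \<in> APT \<Longrightarrow> smul c X \<in> APT"
  by (simp add: APT_def slice_def lin_smul LiePT.smul)

lemma APT_zero: "0 \<in> APT"
  by (simp add: APT_def slice_def LiePT.zero)

lemma APT_tens: "x \<in> LiePT \<Longrightarrow> tens \<alpha> x \<in> APT"
  by (simp add: APT_def slice_tens LiePT.smul)

lemma sum_slices: "(\<Sum>m\<in>fst ` keys X. tens (single m 1) (slice m X)) = (X :: 'k::field ATPT)"
proof (rule lin_map_eq_on_keys[where f = "\<lambda>Y. \<Sum>m\<in>fst ` keys X. tens (single m 1) (slice m Y)" and g = "\<lambda>Y. Y"])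
  show "lin_map (\<lambda>Y. \<Sum>m\<in>fst ` keys X. tens (single m 1) (slice m Y))"
    unfolding slice_def
    by (rule lin_mapI) (simp_all add: lin_add lin_smul tens_linear sum.distrib smul_sum
        lin_map_smul[OF lin_map_tens_right])
  fix p assume p: "p \<in> keys X"
  obtain m0 w where p_eq: "p = (m0, w)" by (cases p)
  have "m0 \<in> fst ` keys X" using p p_eq by force
  have "(\<Sum>m\<in>fst ` keys X. tens (single m 1) (slice m (single p (1::'k))))
      = (\<Sum>m\<in>fst ` keys X. if m0 = m then tens (single m 1) (single w 1) else 0)"
    by (rule sum.cong) (simp_all add: p_eq slice_def lin_map_zero[OF lin_map_tens_right])
  also have "\<dots> = single p 1"
    using \<open>m0 \<in> fst ` keys X\<close> by (simp add: p_eq tens_single)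
  finally show "(\<Sum>m\<in>fst ` keys X. tens (single m 1) (slice m (single p 1))) = single p (1::'k)" .
qed simp

lemma APT_induct [consumes 1, case_names zero add tens]:
  fixes X :: "'k::field ATPT"
  assumes "X \<in> APT"
    and zero: "P 0"
    and add: "\<And>X Y. P X \<Longrightarrow> P Y \<Longrightarrow> P (X + Y)"
    and tens: "\<And>m x. x \<in> LiePT \<Longrightarrow> P (tens (single m 1) x)"
  shows "P X"
proof -
  have sum: "P (sum g I)" if "\<And>i. i \<in> I \<Longrightarrow> P (g i)" for g :: "aroma multiset \<Rightarrow> 'k ATPT" and I
    using that by (induction I rule: infinite_finite_induct) (simp_all add: zero add)
  have "slice m X \<in> LiePT" for m
    using \<open>X \<in> APT\<close> by (simp add: APT_def)
  then have "P (\<Sum>m\<in>fst ` keys X. tens (single m 1) (slice m X))"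
    by (intro sum tens)
  then show ?thesis by (simp add: sum_slices)
qed

lemma brA_APT:
  assumes "X \<in> APT" "Y \<in> APT"
  shows "brA X Y \<in> APT"
  using assms(1)
proof (induction rule: APT_induct)
  case (tens m x)
  show ?case
    using assms(2)
    by (induction rule: APT_induct)
      (simp_all add: APT_zero APT_add brA_add_right brA_tens APT_tens LiePT_bracket tens)
qed (simp_all add: APT_zero APT_add brA_add_left)

lemma triA_APT:
  assumes "X \<in> APT" "Y \<in> APT"
  shows "triA X Y \<in> APT"
  using assms(1)
proof (induction rule: APT_induct)
  case (tens m x)
  show ?case
    using assms(2)
    by (induction rule: APT_induct)
      (simp_all add: APT_zero APT_add triA_add_right triA_tens APT_tens act_graft_LiePT tens)
qed (simp_all add: APT_zero APT_add triA_add_left)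

lemma triA_brA:
  assumes "X \<in> APT" "Y \<in> APT" "Z \<in> APT"
  shows "triA X (brA Y Z) = brA (triA X Y) Z + brA Y (triA X Z)"
  using assms(1)
proof (induction rule: APT_induct)
  case (tens m x)
  show ?case
    using assms(2)
  proof (induction rule: APT_induct)
    case (tens m' y)
    show ?case
      using assms(3)
      by (induction rule: APT_induct)
        (simp_all add: triA_brA_tens \<open>x \<in> LiePT\<close> brA_add_right triA_add_right)
  qed (simp_all add: brA_add_left triA_add_right)
qed (simp_all add: triA_add_left brA_add_left brA_add_right)

lemma brA_triA:
  assumes "X \<in> APT" "Y \<in> APT" "Z \<in> APT"
  shows "triA (brA X Y) Z = triA X (triA Y Z) - triA (triA X Y) Z - triA Y (triA X Z) + triA (triA Y X) Z"
  using assms(1)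
proof (induction rule: APT_induct)
  case (tens m x)
  show ?case
    using assms(2)
  proof (induction rule: APT_induct)
    case (tens m' y)
    show ?case
      using assms(3)
      by (induction rule: APT_induct)
        (simp_all add: brA_triA_tens \<open>x \<in> LiePT\<close> \<open>y \<in> LiePT\<close> triA_add_right)
  qed (simp_all add: brA_add_right triA_add_left triA_add_right)
qed (simp_all add: brA_add_left triA_add_left triA_add_right)

theorem mainTheorem2:
  fixes APTk :: "'k::field ATPT set"
  defines "APTk \<equiv> APT"
  shows
   "(\<forall>X\<in>APTk. \<forall>Y\<in>APTk. \<forall>c::'k. X + Y \<in> APTk \<and> smul c X \<in> APTk) \<and>
    (\<forall>X\<in>APTk. \<forall>Y\<in>APTk. brA X Y \<in> APTk \<and> triA X Y \<in> APTk) \<and>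
    (\<forall>X\<in>APTk. \<forall>Y\<in>APTk. \<forall>Z\<in>APTk. \<forall>c::'k.
        brA (X + Y) Z = brA X Z + brA Y Z \<and> brA Z (X + Y) = brA Z X + brA Z Y \<and>
        brA (smul c X) Y = smul c (brA X Y) \<and> brA X (smul c Y) = smul c (brA X Y) \<and>
        triA (X + Y) Z = triA X Z + triA Y Z \<and> triA Z (X + Y) = triA Z X + triA Z Y \<and>
        triA (smul c X) Y = smul c (triA X Y) \<and> triA X (smul c Y) = smul c (triA X Y)) \<and>
    (\<forall>X\<in>APTk. brA X X = 0) \<and>
    (\<forall>X\<in>APTk. \<forall>Y\<in>APTk. \<forall>Z\<in>APTk.
        brA X (brA Y Z) + brA Y (brA Z X) + brA Z (brA X Y) = 0) \<and>
    (\<forall>X\<in>APTk. \<forall>Y\<in>APTk. \<forall>Z\<in>APTk.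
        triA X (brA Y Z) = brA (triA X Y) Z + brA Y (triA X Z)) \<and>
    (\<forall>X\<in>APTk. \<forall>Y\<in>APTk. \<forall>Z\<in>APTk.
        triA (brA X Y) Z = triA X (triA Y Z) - triA (triA X Y) Z - triA Y (triA X Z) + triA (triA Y X) Z)"
proof -
  have lie: "brA X X = 0" "brA X (brA Y Z) + brA Y (brA Z X) + brA Z (brA X Y) = 0" for X Y Z :: "'k ATPT"
    by (simp_all add: brA_eq algebra_simps)
  show ?thesis
    unfolding APTk_def
    by (simp add: lie APT_add APT_smul brA_APT triA_APT triA_brA brA_triA
        brA_add_left brA_add_right brA_smul_left brA_smul_right
        triA_add_left triA_add_right triA_smul_left triA_smul_right)
qed

end
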